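(* Let $q$ be a prime power and $n\ge2$. Let $G$ be the group of $(n+1)\times(n+1)$ matrices over $\mathbb{F}_q[t]$ generated by $\{e_{i,i+1}(a+bt):a,b\in\mathbb{F}_q,1\le i\le n\}$, and for $0\le i\le n-1$ let $K_{\{i\}}=\langle e_{j,j+1}(a+bt):j\in\{1,\dots,n\}\setminus\{i+1\},a,b\in\mathbb{F}_q\rangle$. Then the subgroups $K_{\{0\}},\dots,K_{\{n-1\}}$ boundedly generate $G$, and $$\max_{g\in G}\min\{l: g=g_1\cdots g_l,\ g_1,\dots,g_l\in\textstyle\bigcup_iK_{\{i\}}\}\le 2+4(n+1).$$
   Context: $e_{i,j}(r)$ is the $(n+1)\times(n+1)$ matrix with $1$'s on the diagonal, $r$ in entry $(i,j)$ and $0$ elsewhere. Equivalently, $A\in G$ iff $A$ is upper triangular with $1$'s on the diagonal and, for $i<j$, $A(i,j)$ is a polynomial in $t$ over $\mathbb{F}_q$ of degree $\le j-i$. Subgroups boundedly generate $G$ if some fixed $L$ bounds the number of factors from their union needed to write every element of $G$. *)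

theory Defs
  imports "HOL-Computational_Algebra.Polynomial"
begin

text \<open>(n+1) x (n+1) matrices over a ring R are represented as functions
  nat \<Rightarrow> nat \<Rightarrow> R, with rows/columns indexed by {1..n+1}; entries outside
  this index range are irrelevant and are normalised to 0 by the operations.\<close>

type_synonym 'r mat = "nat \<Rightarrow> nat \<Rightarrow> 'r"

definition mid :: "nat \<Rightarrow> 'r::comm_ring_1 mat" where
  "mid n = (\<lambda>i j. if i \<in> {1..n+1} \<and> i = j then 1 else 0)"

definition mmul :: "nat \<Rightarrow> 'r::comm_ring_1 mat \<Rightarrow> 'r mat \<Rightarrow> 'r mat" where
  "mmul n A B = (\<lambda>i j. if i \<in> {1..n+1} \<and> j \<in> {1..n+1}
                      then (\<Sum>k\<in>{1..n+1}. A i k * B k j) else 0)"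

definition elem :: "nat \<Rightarrow> nat \<Rightarrow> nat \<Rightarrow> 'r::comm_ring_1 \<Rightarrow> 'r mat" where
  "elem n i j r = (\<lambda>a b. if a = i \<and> b = j then r else mid n a b)"

text \<open>Subgroup generated by a set S of (n+1)x(n+1) matrices: the monoid
  generated by S together with the (two-sided) inverses of elements of S.\<close>
inductive_set gen_group :: "nat \<Rightarrow> 'r::comm_ring_1 mat set \<Rightarrow> 'r mat set"
  for n :: nat and S :: "'r mat set" where
  gen_one: "mid n \<in> gen_group n S"
| gen_mul: "s \<in> S \<Longrightarrow> g \<in> gen_group n S \<Longrightarrow> mmul n s g \<in> gen_group n S"
| gen_inv: "s \<in> S \<Longrightarrow> mmul n s' s = mid n \<Longrightarrow> mmul n s s' = mid n
            \<Longrightarrow> g \<in> gen_group n S \<Longrightarrow> mmul n s' g \<in> gen_group n S"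

definition mprod :: "nat \<Rightarrow> 'r::comm_ring_1 mat list \<Rightarrow> 'r mat" where
  "mprod n gs = foldr (mmul n) gs (mid n)"

definition Ggrp :: "nat \<Rightarrow> ('a::field) poly mat set" where
  "Ggrp n = gen_group n {elem n i (i+1) [:a, b:] | i a b. 1 \<le> i \<and> i \<le> n}"

definition Ksub :: "nat \<Rightarrow> nat \<Rightarrow> ('a::field) poly mat set" where
  "Ksub n i = gen_group n {elem n j (j+1) [:a, b:] | j a b. j \<in> {1..n} - {i+1}}"

end

theory Submission
  imports Defs
begin

(* Every element of G is upper unitriangular with deg g(i,j) <= j - i.  Conversely, the
   generators e_{j,j+1}(a+bt) with l <= j < m generate every such matrix supported on the
   diagonal block l..m: the commutator [e_{i,i+1}(x), e_{i+1,j}(y)] = e_{i,j}(xy) yields every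
   e_{i,j}(p) with deg p <= j - i, and such elementary matrices peel the matrix off entry by
   entry.  So K_{n-1} contains the matrices on the block 1..n and K_0 those on the block
   2..n+1.  Now g = e_{1,n+1}(c) C B, where B is g with its last column cleared (in K_{n-1})
   and C carries the rest of that column (in K_0); writing c = t q + a, the corner is
   [e_{1,2}(t), e_{2,n+1}(q)] [e_{1,2}(a), e_{2,n+1}(1)], eight factors from K_{n-1} and K_0. *)

section \<open>Matrix algebra\<close>

definition mtrunc :: "nat \<Rightarrow> 'r::zero mat \<Rightarrow> 'r mat" where
  "mtrunc n A = (\<lambda>i j. if i \<in> {1..n+1} \<and> j \<in> {1..n+1} then A i j else 0)"

lemma mmul_assoc: "mmul n (mmul n A B) C = mmul n A (mmul n B C)"
proof (intro ext)
  fix i j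
  show "mmul n (mmul n A B) C i j = mmul n A (mmul n B C) i j"
  proof (cases "i \<in> {1..n+1} \<and> j \<in> {1..n+1}")
    case True
    have "mmul n (mmul n A B) C i j = (\<Sum>k\<in>{1..n+1}. (\<Sum>m\<in>{1..n+1}. A i m * B m k) * C k j)"
      using True unfolding mmul_def by (auto intro!: sum.cong)
    also have "\<dots> = (\<Sum>k\<in>{1..n+1}. \<Sum>m\<in>{1..n+1}. A i m * B m k * C k j)"
      by (simp only: sum_distrib_right)
    also have "\<dots> = (\<Sum>m\<in>{1..n+1}. \<Sum>k\<in>{1..n+1}. A i m * B m k * C k j)"
      by (rule sum.swap)
    also have "\<dots> = (\<Sum>m\<in>{1..n+1}. A i m * (\<Sum>k\<in>{1..n+1}. B m k * C k j))"
      by (simp only: sum_distrib_left mult.assoc)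
    also have "\<dots> = mmul n A (mmul n B C) i j"
      using True unfolding mmul_def by (auto intro!: sum.cong)
    finally show ?thesis .
  qed (auto simp: mmul_def)
qed

lemma mmul_mid_left: "mmul n (mid n) B = mtrunc n B"
  by (intro ext) (simp add: mmul_def mtrunc_def mid_def if_distrib[of "\<lambda>x. x * _"] cong: if_cong)

lemma mmul_mid_right: "mmul n A (mid n) = mtrunc n A"
  by (intro ext) (simp add: mmul_def mtrunc_def mid_def if_distrib[of "\<lambda>x. _ * x"] cong: if_cong)

lemma mtrunc_mmul [simp]: "mtrunc n (mmul n A B) = mmul n A B"
  by (simp add: mtrunc_def mmul_def fun_eq_iff)

lemma mtrunc_mid [simp]: "mtrunc n (mid n) = mid n"
  by (simp add: mtrunc_def mid_def fun_eq_iff)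

lemma mmul_mtrunc_left [simp]: "mmul n (mtrunc n A) B = mmul n A B"
  by (simp add: mmul_def mtrunc_def fun_eq_iff)

lemma mtrunc_elem [simp]:
  "i \<in> {1..n+1} \<Longrightarrow> j \<in> {1..n+1} \<Longrightarrow> mtrunc n (elem n i j r) = elem n i j r"
  by (auto simp: mtrunc_def elem_def mid_def fun_eq_iff)

definition col_transvection :: "nat \<Rightarrow> nat \<Rightarrow> (nat \<Rightarrow> 'r::comm_ring_1) \<Rightarrow> 'r mat" where
  "col_transvection n m v = (\<lambda>i j. if j = m \<and> i \<noteq> m \<and> i \<in> {1..n+1} then v i else mid n i j)"

lemma mmul_col_transvection:
  assumes "m \<in> {1..n+1}"
  shows "mmul n (col_transvection n m v) B = (\<lambda>i j. if i \<in> {1..n+1} \<and> j \<in> {1..n+1}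
           then B i j + (if i \<noteq> m then v i * B m j else 0) else 0)"
proof (intro ext)
  fix i j
  have "(\<Sum>k\<in>{1..n+1}. col_transvection n m v i k * B k j)
          = (\<Sum>k\<in>{1..n+1}. (if k = i then B i j else 0) + (if k = m \<and> i \<noteq> m then v i * B m j else 0))"
    if "i \<in> {1..n+1}"
    using that by (intro sum.cong) (auto simp: col_transvection_def mid_def)
  then show "mmul n (col_transvection n m v) B i j = (if i \<in> {1..n+1} \<and> j \<in> {1..n+1}
           then B i j + (if i \<noteq> m then v i * B m j else 0) else 0)"
    using assms by (simp add: mmul_def sum.distrib)
qed

lemma elem_eq_col_transvection:
  "i \<in> {1..n+1} \<Longrightarrow> i \<noteq> j \<Longrightarrow> elem n i j a = col_transvection n j (\<lambda>k. if k = i then a else 0)"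
  by (auto simp: elem_def col_transvection_def mid_def fun_eq_iff)

lemma mmul_elem_left:
  assumes "i \<in> {1..n+1}" "j \<in> {1..n+1}" "i \<noteq> j"
  shows "mmul n (elem n i j a) B = (\<lambda>x y. if x \<in> {1..n+1} \<and> y \<in> {1..n+1}
           then B x y + (if x = i then a * B j y else 0) else 0)"
  using assms by (auto simp: elem_eq_col_transvection mmul_col_transvection fun_eq_iff)

lemma elem_zero: "i \<noteq> j \<Longrightarrow> elem n i j 0 = mid n"
  by (auto simp: elem_def mid_def fun_eq_iff)

lemma elem_add:
  assumes "i \<in> {1..n+1}" "j \<in> {1..n+1}" "i \<noteq> j"
  shows "elem n i j (x + y) = mmul n (elem n i j x) (elem n i j y)"
  unfolding mmul_elem_left[OF assms] using assms by (auto simp: elem_def mid_def fun_eq_iff)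

lemma elem_commutator:
  assumes "i \<in> {1..n+1}" "j \<in> {1..n+1}" "k \<in> {1..n+1}" "i \<noteq> j" "j \<noteq> k" "i \<noteq> k"
  shows "elem n i k (x * y) = mmul n (elem n i j x)
           (mmul n (elem n j k y) (mmul n (elem n i j (-x)) (elem n j k (-y))))"
  unfolding mmul_elem_left[OF assms(1,2,4)] mmul_elem_left[OF assms(2,3,5)]
  using assms by (auto simp: elem_def mid_def fun_eq_iff algebra_simps)

lemma mmul_left_inverse_elem:
  assumes "i \<in> {1..n+1}" "j \<in> {1..n+1}" "i \<noteq> j" "mmul n s (elem n i j a) = mid n"
  shows "mmul n s B = mmul n (elem n i j (-a)) B"
proof -
  have "mtrunc n s = mmul n s (mmul n (elem n i j a) (elem n i j (-a)))"
    using assms by (simp flip: elem_add add: elem_zero mmul_mid_right)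
  also have "\<dots> = elem n i j (-a)"
    using assms by (simp flip: mmul_assoc add: mmul_mid_left)
  finally show ?thesis
    by (metis mmul_mtrunc_left)
qed

lemma gen_group_mtrunc: "g \<in> gen_group n S \<Longrightarrow> mtrunc n g = g"
  by (induction rule: gen_group.induct) auto

lemma gen_group_mmul:
  "g \<in> gen_group n S \<Longrightarrow> h \<in> gen_group n S \<Longrightarrow> mmul n g h \<in> gen_group n S"
  by (induction rule: gen_group.induct)
     (simp_all add: mmul_mid_left gen_group_mtrunc mmul_assoc gen_group.gen_mul gen_group.gen_inv)

lemma gen_group_generator: "s \<in> S \<Longrightarrow> mtrunc n s = s \<Longrightarrow> s \<in> gen_group n S"
  using gen_group.gen_mul[OF _ gen_group.gen_one, of s S n] by (simp add: mmul_mid_right)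

lemma mprod_Nil [simp]: "mprod n [] = mid n"
  and mprod_Cons [simp]: "mprod n (g # gs) = mmul n g (mprod n gs)"
  by (simp_all add: mprod_def)

lemma mtrunc_mprod [simp]: "mtrunc n (mprod n gs) = mprod n gs"
  by (cases gs) simp_all

lemma mprod_append: "mprod n (xs @ ys) = mmul n (mprod n xs) (mprod n ys)"
  by (induction xs) (simp_all add: mmul_mid_left mmul_assoc)

lemma mprod_in_gen_group: "set gs \<subseteq> gen_group n S \<Longrightarrow> mprod n gs \<in> gen_group n S"
  by (induction gs) (simp_all add: gen_group.gen_one gen_group_mmul)

definition commutator_word :: "nat \<Rightarrow> nat \<Rightarrow> nat \<Rightarrow> nat \<Rightarrow> 'r::comm_ring_1 \<Rightarrow> 'r \<Rightarrow> 'r mat list" where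
  "commutator_word n i j k x y = [elem n i j x, elem n j k y, elem n i j (-x), elem n j k (-y)]"

lemma mprod_commutator_word:
  assumes "i \<in> {1..n+1}" "j \<in> {1..n+1}" "k \<in> {1..n+1}" "i \<noteq> j" "j \<noteq> k" "i \<noteq> k"
  shows "mprod n (commutator_word n i j k x y) = elem n i k (x * y)"
  using assms by (simp add: commutator_word_def mmul_mid_right elem_commutator)

lemma elem_eq_mprod_commutator_words:
  assumes "i \<in> {1..n+1}" "j \<in> {1..n+1}" "k \<in> {1..n+1}" "i \<noteq> j" "j \<noteq> k" "i \<noteq> k"
  shows "elem n i k (x * y + z * w) = mprod n (commutator_word n i j k x y @ commutator_word n i j k z w)"
  using assms by (simp add: mprod_append mprod_commutator_word elem_add)

section \<open>Unitriangular matrices with degree bounds\<close>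

lemma degree_le_Suc_split:
  fixes p :: "'a::comm_ring_1 poly"
  assumes "degree p \<le> Suc d"
  obtains a q where "p = [:0, 1:] * q + [:a:]" "degree q \<le> d"
proof -
  obtain a q where "p = pCons a q"
    by (rule pCons_cases)
  with assms that show thesis
    by (simp split: if_splits)
qed

lemma degree_le_1_eq:
  fixes p :: "'a::zero poly"
  shows "degree p \<le> 1 \<Longrightarrow> p = [:coeff p 0, coeff p 1:]"
  by (rule poly_eqI) (auto simp: coeff_pCons coeff_eq_0 split: nat.split)

text \<open>For l = 1 and m = n + 1 this is G; only the inclusion of G is proved and needed.\<close>

definition block_unitri :: "nat \<Rightarrow> nat \<Rightarrow> nat \<Rightarrow> 'a::comm_ring_1 poly mat set" where
  "block_unitri n l m = {A. (\<forall>i j. A i j \<noteq> 0 \<longrightarrow> i \<in> {1..n+1} \<and> j \<in> {1..n+1})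
     \<and> (\<forall>i\<in>{1..n+1}. A i i = 1)
     \<and> (\<forall>i j. i \<noteq> j \<and> A i j \<noteq> 0 \<longrightarrow> l \<le> i \<and> i < j \<and> j \<le> m)
     \<and> (\<forall>i j. degree (A i j) \<le> j - i)}"

lemma block_unitriD:
  assumes "A \<in> block_unitri n l m"
  shows block_unitri_nonzero: "A i j \<noteq> 0 \<Longrightarrow> i \<in> {1..n+1} \<and> j \<in> {1..n+1}"
    and block_unitri_diag: "A i i = mid n i i"
    and block_unitri_support: "i \<noteq> j \<Longrightarrow> A i j \<noteq> 0 \<Longrightarrow> l \<le> i \<and> i < j \<and> j \<le> m"
    and block_unitri_degree: "degree (A i j) \<le> j - i"
    and block_unitri_mtrunc: "mtrunc n A = A"
proof -
  show nonzero: "A i j \<noteq> 0 \<Longrightarrow> i \<in> {1..n+1} \<and> j \<in> {1..n+1}" for i j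
    using assms by (simp add: block_unitri_def)
  show "A i i = mid n i i"
    using assms nonzero[of i i] by (cases "i \<in> {1..n+1}") (auto simp: block_unitri_def mid_def)
  show "mtrunc n A = A"
    using nonzero by (fastforce simp: mtrunc_def)
qed (use assms in \<open>auto simp: block_unitri_def\<close>)

lemma mid_in_block_unitri: "mid n \<in> block_unitri n l m"
  by (simp add: block_unitri_def mid_def)

lemma elem_in_block_unitri:
  assumes "1 \<le> l" "l \<le> i" "i < j" "j \<le> m" "m \<le> n + 1" "degree p \<le> j - i"
  shows "elem n i j p \<in> block_unitri n l m"
  using assms by (auto simp: block_unitri_def elem_def mid_def)

lemma block_unitri_mmul:
  assumes A: "A \<in> block_unitri n l m" and B: "B \<in> block_unitri n l m"
  shows "mmul n A B \<in> block_unitri n l m"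
proof -
  have between: "i \<le> k \<and> k \<le> j" if "A i k * B k j \<noteq> 0" for i k j
  proof -
    from that have "A i k \<noteq> 0" "B k j \<noteq> 0"
      by auto
    then show ?thesis
      using block_unitri_support[OF A, of i k] block_unitri_support[OF B, of k j] by fastforce
  qed
  have diag: "mmul n A B i i = 1" if "i \<in> {1..n+1}" for i
  proof -
    have "(\<Sum>k\<in>{1..n+1}. A i k * B k i) = (\<Sum>k\<in>{1..n+1}. if k = i then 1 else 0)"
      using between[of i _ i] block_unitri_diag[OF A, of i] block_unitri_diag[OF B, of i] that
      by (intro sum.cong) (auto simp: mid_def, metis le_antisym)
    then show ?thesis
      using that by (simp add: mmul_def)
  qed
  have support: "l \<le> i \<and> i < j \<and> j \<le> m" if "i \<noteq> j" "mmul n A B i j \<noteq> 0" for i j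
  proof -
    from that obtain k where k: "A i k * B k j \<noteq> 0"
      unfolding mmul_def by (metis (lifting) sum.not_neutral_contains_not_neutral)
    then have "A i k \<noteq> 0" "B k j \<noteq> 0"
      by auto
    then show ?thesis
      using between[OF k] that block_unitri_support[OF A, of i k] block_unitri_support[OF B, of k j]
      by (cases "i = k") auto
  qed
  have degree: "degree (mmul n A B i j) \<le> j - i" for i j
  proof -
    have "degree (A i k * B k j) \<le> j - i" for k
    proof (cases "A i k * B k j = 0")
      case False
      have "degree (A i k * B k j) \<le> (k - i) + (j - k)"
        using degree_mult_le block_unitri_degree[OF A] block_unitri_degree[OF B] add_mono order_trans
        by metis
      then show ?thesis
        using between[OF False] by linarith
    qed simp
    then show ?thesis
      by (simp add: mmul_def degree_sum_le del: sum.cl_ivl_Suc)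
  qed
  have range: "i \<in> {1..n+1} \<and> j \<in> {1..n+1}" if "mmul n A B i j \<noteq> 0" for i j
    using that unfolding mmul_def by metis
  show ?thesis
    using range diag support degree by (auto simp: block_unitri_def)
qed

lemma gen_group_subset_block_unitri:
  assumes "S \<subseteq> {elem n j (j+1) p | j p. 1 \<le> j \<and> j \<le> n \<and> degree p \<le> 1}"
  shows "gen_group n S \<subseteq> block_unitri n 1 (n+1)"
proof
  have superdiag: "elem n j (j+1) p \<in> block_unitri n 1 (n+1)"
    if "1 \<le> j" "j \<le> n" "degree p \<le> 1" for j p
    using that by (intro elem_in_block_unitri) auto
  fix g assume "g \<in> gen_group n S"
  then show "g \<in> block_unitri n 1 (n+1)"
  proof (induction rule: gen_group.induct)
    case gen_one
    show ?case
      by (rule mid_in_block_unitri)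
  next
    case (gen_mul s g)
    then obtain j p where "s = elem n j (j+1) p" "1 \<le> j" "j \<le> n" "degree p \<le> 1"
      using assms by blast
    then show ?case
      using gen_mul.IH superdiag block_unitri_mmul by metis
  next
    case (gen_inv s s' g)
    then obtain j p where s: "s = elem n j (j+1) p" "1 \<le> j" "j \<le> n" "degree p \<le> 1"
      using assms by blast
    then have "mmul n s' g = mmul n (elem n j (j+1) (-p)) g"
      using gen_inv.hyps by (intro mmul_left_inverse_elem) auto
    then show ?case
      using s gen_inv.IH superdiag block_unitri_mmul degree_minus by metis
  qed
qed

section \<open>Generation by superdiagonal elementary matrices\<close>

lemma block_unitri_row_eq_mid:
  assumes "A \<in> block_unitri n l m" "\<And>k. y < k \<Longrightarrow> A y k = 0"
  shows "A y k = mid n y k"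
proof (cases "k = y")
  case True
  then show ?thesis
    using block_unitri_diag[OF assms(1)] by simp
next
  case False
  then have "A y k = 0"
    using assms(2) block_unitri_support[OF assms(1), of y k] by blast
  then show ?thesis
    using False by (simp add: mid_def)
qed

lemma elem_mmul_clear_entry:
  assumes "i \<in> {1..n+1}" "j \<in> {1..n+1}" "i \<noteq> j" "mtrunc n A = A" "\<And>k. A j k = mid n j k"
  shows "mmul n (elem n i j (A i j)) (A(i := (A i)(j := 0))) = A"
proof (intro ext)
  fix x y
  show "mmul n (elem n i j (A i j)) (A(i := (A i)(j := 0))) x y = A x y"
  proof (cases "x \<in> {1..n+1} \<and> y \<in> {1..n+1}")
    case True
    then show ?thesis
      unfolding mmul_elem_left[OF assms(1-3)] using assms(3,5) by (auto simp: mid_def)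
  next
    case False
    then show ?thesis
      unfolding mmul_elem_left[OF assms(1-3)] by (metis assms(4) mtrunc_def)
  qed
qed

lemma block_unitri_clear_entry:
  assumes "A \<in> block_unitri n l m" "i \<noteq> j"
  shows "A(i := (A i)(j := 0)) \<in> block_unitri n l m"
  using assms by (auto simp: block_unitri_def)

definition offdiag_support :: "'r::zero mat \<Rightarrow> (nat \<times> nat) set" where
  "offdiag_support A = {(i, j). i \<noteq> j \<and> A i j \<noteq> 0}"

lemma finite_offdiag_support:
  assumes "A \<in> block_unitri n l m"
  shows "finite (offdiag_support A)"
proof (rule finite_subset)
  show "offdiag_support A \<subseteq> {1..n+1} \<times> {1..n+1}"
    using block_unitri_nonzero[OF assms] by (auto simp: offdiag_support_def)
qed simp

lemma block_unitri_eq_mid: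
  assumes "A \<in> block_unitri n l m" "offdiag_support A = {}"
  shows "A = mid n"
proof (intro ext)
  fix i j
  show "A i j = mid n i j"
    using assms block_unitri_diag[OF assms(1), of i]
    by (cases "i = j") (auto simp: offdiag_support_def mid_def)
qed

locale superdiagonal_generators =
  fixes n l m :: nat and S :: "'a::comm_ring_1 poly mat set"
  assumes one_le_l: "1 \<le> l" and m_le: "m \<le> n + 1"
    and generators: "\<And>j a b. l \<le> j \<Longrightarrow> j + 1 \<le> m \<Longrightarrow> elem n j (j+1) [:a, b:] \<in> S"
begin

lemma superdiag_elem_in_gen_group:
  assumes "l \<le> i" "i + 1 \<le> m" "degree p \<le> 1"
  shows "elem n i (i+1) p \<in> gen_group n S"
proof (rule gen_group_generator)
  show "elem n i (i+1) p \<in> S"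
    using generators[OF assms(1,2)] degree_le_1_eq[OF assms(3)] by metis
  show "mtrunc n (elem n i (i+1) p) = elem n i (i+1) p"
    using assms one_le_l m_le by simp
qed

lemma elem_in_gen_group:
  assumes "l \<le> i" "i < j" "j \<le> m" "degree p \<le> j - i"
  shows "elem n i j p \<in> gen_group n S"
proof -
  obtain d where "j = i + Suc d"
    using \<open>i < j\<close> less_iff_Suc_add by auto
  with assms show ?thesis
  proof (induction d arbitrary: i j p)
    case 0
    then show ?case
      using superdiag_elem_in_gen_group by simp
  next
    case (Suc d)
    have "degree p \<le> Suc (j - (i+1))"
      using Suc.prems by simp
    then obtain a q where "p = [:0, 1:] * q + [:a:]" and q: "degree q \<le> j - (i+1)"
      by (rule degree_le_Suc_split)
    then have p: "p = [:0, 1:] * q + [:a:] * 1"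
      by simp
    let ?w = "commutator_word n i (i+1) j [:0, 1:] q @ commutator_word n i (i+1) j [:a:] 1"
    have "elem n i j p = mprod n ?w"
      unfolding p using Suc.prems one_le_l m_le by (intro elem_eq_mprod_commutator_words) auto
    moreover have "set ?w \<subseteq> gen_group n S"
      using Suc.prems Suc.IH[of "i+1" j] q superdiag_elem_in_gen_group
      by (auto simp: commutator_word_def)
    ultimately show ?case
      using mprod_in_gen_group by metis
  qed
qed

lemma block_unitri_subset_gen_group: "block_unitri n l m \<subseteq> gen_group n S"
proof
  fix A :: "'a poly mat"
  assume "A \<in> block_unitri n l m"
  then show "A \<in> gen_group n S"
  proof (induction "card (offdiag_support A)" arbitrary: A rule: less_induct)
    case less
    let ?D = "offdiag_support A"
    show ?case
    proof (cases "?D = {}")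
      case True
      then show ?thesis
        using block_unitri_eq_mid[OF less.prems] gen_group.gen_one by metis
    next
      case False
      txt \<open>Clear an entry in the rightmost occupied column y: row y is then an identity row,
        so one elementary factor on the left removes the entry.\<close>
      have fin: "finite ?D"
        using finite_offdiag_support[OF less.prems] .
      define y where "y = Max (snd ` ?D)"
      have "y \<in> snd ` ?D"
        unfolding y_def using fin False by (intro Max_in) auto
      then obtain x where xy: "(x, y) \<in> ?D"
        by force
      have y_max: "j \<le> y" if "(i, j) \<in> ?D" for i j
        unfolding y_def using fin that by (metis Max_ge finite_imageI image_eqI snd_conv)
      have Axy: "x \<noteq> y" "A x y \<noteq> 0"
        using xy by (auto simp: offdiag_support_def)
      have rng: "x \<in> {1..n+1}" "y \<in> {1..n+1}"
        using block_unitri_nonzero[OF less.prems] Axy by blast+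
      have row: "A y k = mid n y k" for k
      proof (rule block_unitri_row_eq_mid[OF less.prems])
        show "A y k = 0" if "y < k" for k
          using that y_max[of y k] by (auto simp: offdiag_support_def)
      qed
      let ?A' = "A(x := (A x)(y := 0))"
      have "A = mmul n (elem n x y (A x y)) ?A'"
        using rng Axy row block_unitri_mtrunc[OF less.prems] by (simp add: elem_mmul_clear_entry)
      moreover have "elem n x y (A x y) \<in> gen_group n S"
        using block_unitri_support[OF less.prems Axy] block_unitri_degree[OF less.prems]
        by (intro elem_in_gen_group) auto
      moreover have "?A' \<in> gen_group n S"
      proof (rule less.hyps)
        have "offdiag_support ?A' = ?D - {(x, y)}"
          by (auto simp: offdiag_support_def split: if_splits)
        then show "card (offdiag_support ?A') < card ?D"
          using card_Diff1_less[OF fin xy] by (simp only:)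
        show "?A' \<in> block_unitri n l m"
          using less.prems Axy(1) by (rule block_unitri_clear_entry)
      qed
      ultimately show ?thesis
        by (metis gen_group_mmul)
    qed
  qed
qed

end

section \<open>Factorisation of G\<close>

lemma block_unitri_split_last_column:
  assumes A: "A \<in> block_unitri n l m" and "1 \<le> l" "l < m" "m \<le> n + 1"
  obtains C B where "A = mmul n (elem n l m (A l m)) (mmul n C B)"
    "C \<in> block_unitri n (l + 1) m" "B \<in> block_unitri n l (m - 1)"
proof -
  have rng: "l \<in> {1..n+1}" "m \<in> {1..n+1}" "l \<noteq> m"
    using assms by auto
  define B where "B = (\<lambda>i j. if j = m \<and> i \<noteq> m then 0 else A i j)"
  define C where "C = col_transvection n m (\<lambda>i. if i = l then 0 else A i m)"
  have row_m: "A m j = mid n m j" for j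
  proof (rule block_unitri_row_eq_mid[OF A])
    show "A m k = 0" if "m < k" for k
      using that block_unitri_support[OF A, of m k] by fastforce
  qed
  have "mmul n (col_transvection n m (\<lambda>i. A i m)) B = A"
  proof (intro ext)
    fix i j
    show "mmul n (col_transvection n m (\<lambda>i. A i m)) B i j = A i j"
      unfolding mmul_col_transvection[OF rng(2)] B_def
      using row_m[of j] block_unitri_nonzero[OF A, of i j] by (auto simp: mid_def)
  qed
  moreover have "mmul n (elem n l m (A l m)) C = col_transvection n m (\<lambda>i. A i m)"
    unfolding mmul_elem_left[OF rng] C_def col_transvection_def using rng
    by (auto simp: mid_def fun_eq_iff)
  moreover have "C \<in> block_unitri n (l + 1) m"
  proof -
    have "l + 1 \<le> i \<and> i < m" if "i \<noteq> l" "i \<noteq> m" "A i m \<noteq> 0" for i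
      using block_unitri_support[OF A that(2,3)] that(1) by simp
    then show ?thesis
      using block_unitri_degree[OF A, of _ m] rng
      by (auto simp: C_def col_transvection_def block_unitri_def mid_def)
  qed
  moreover have "B \<in> block_unitri n l (m - 1)"
  proof -
    have "l \<le> i \<and> i < j \<and> j \<le> m - 1" if "i \<noteq> j" "B i j \<noteq> 0" for i j
      using block_unitri_support[OF A, of i j] that by (auto simp: B_def split: if_splits)
    moreover have "B i j \<noteq> 0 \<Longrightarrow> i \<in> {1..n+1} \<and> j \<in> {1..n+1}" for i j
      using block_unitri_nonzero[OF A, of i j] by (simp add: B_def split: if_splits)
    moreover have "B i i = 1" if "i \<in> {1..n+1}" for i
      using block_unitri_diag[OF A, of i] that by (simp add: B_def mid_def)
    moreover have "degree (B i j) \<le> j - i" for i j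
      using block_unitri_degree[OF A, of i j] by (simp add: B_def)
    ultimately show ?thesis
      unfolding block_unitri_def by blast
  qed
  ultimately show thesis
    using that mmul_assoc by metis
qed

lemma Ggrp_subset_block_unitri: "Ggrp n \<subseteq> block_unitri n 1 (n + 1)"
  unfolding Ggrp_def by (rule gen_group_subset_block_unitri) force

lemma block_unitri_subset_Ksub_first: "block_unitri n 2 (n + 1) \<subseteq> Ksub n 0"
proof -
  interpret superdiagonal_generators n 2 "n + 1" "{elem n j (j+1) [:a, b:] | j a b. j \<in> {1..n} - {0+1}}"
    by unfold_locales (auto, force)
  show ?thesis
    unfolding Ksub_def by (rule block_unitri_subset_gen_group)
qed

lemma block_unitri_subset_Ksub_last:
  assumes "1 \<le> n"
  shows "block_unitri n 1 n \<subseteq> Ksub n (n - 1)"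
proof -
  interpret superdiagonal_generators n 1 n "{elem n j (j+1) [:a, b:] | j a b. j \<in> {1..n} - {(n-1)+1}}"
    using assms by unfold_locales (auto, force)
  show ?thesis
    unfolding Ksub_def by (rule block_unitri_subset_gen_group)
qed

lemma Ggrp_factorization:
  fixes g :: "'a::field poly mat"
  assumes "2 \<le> n" "g \<in> Ggrp n"
  obtains gs where "length gs = 10" "set gs \<subseteq> Ksub n 0 \<union> Ksub n (n - 1)" "g = mprod n gs"
proof -
  have g: "g \<in> block_unitri n 1 (n + 1)"
    using assms(2) Ggrp_subset_block_unitri by blast
  obtain C B where gCB: "g = mmul n (elem n 1 (n+1) (g 1 (n+1))) (mmul n C B)"
    and C: "C \<in> block_unitri n 2 (n + 1)" and B: "B \<in> block_unitri n 1 n"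
    using block_unitri_split_last_column[OF g] assms(1) by (auto simp: numeral_2_eq_2)
  have "degree (g 1 (n+1)) \<le> Suc (n - 1)"
    using block_unitri_degree[OF g, of 1 "n+1"] assms(1) by simp
  then obtain a q where c: "g 1 (n+1) = [:0, 1:] * q + [:a:] * 1" and q: "degree q \<le> n - 1"
    by (metis degree_le_Suc_split mult.right_neutral)
  let ?gs = "commutator_word n 1 2 (n+1) [:0, 1:] q @ commutator_word n 1 2 (n+1) [:a:] 1 @ [C, B]"
  have "elem n 1 (n+1) (g 1 (n+1)) = mprod n (commutator_word n 1 2 (n+1) [:0, 1:] q
          @ commutator_word n 1 2 (n+1) [:a:] 1)"
    unfolding c using assms(1) by (intro elem_eq_mprod_commutator_words) auto
  then have "g = mprod n ?gs"
    using gCB block_unitri_mtrunc[OF B] by (simp add: mprod_append mmul_mid_right mmul_assoc)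
  moreover have "set ?gs \<subseteq> Ksub n 0 \<union> Ksub n (n - 1)"
  proof -
    have "elem n 1 2 x \<in> Ksub n (n - 1)" if "degree x \<le> 1" for x :: "'a poly"
      using that assms(1) block_unitri_subset_Ksub_last[of n] elem_in_block_unitri[of 1 1 2 n n x] by auto
    moreover have "elem n 2 (n+1) y \<in> Ksub n 0" if "degree y \<le> n - 1" for y :: "'a poly"
      using that assms(1) block_unitri_subset_Ksub_first elem_in_block_unitri[of 2 2 "n+1" "n+1" n y]
      by auto
    ultimately show ?thesis
      using q C B block_unitri_subset_Ksub_first block_unitri_subset_Ksub_last[of n] assms(1)
      by (auto simp: commutator_word_def)
  qed
  moreover have "length ?gs = 10"
    by (simp add: commutator_word_def)
  ultimately show thesis
    using that by blast
qed

theorem lemma7p9: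
  fixes n :: nat
  assumes "n \<ge> 2"
  shows "(\<exists>L::nat. \<forall>g \<in> (Ggrp n :: ('a::{finite,field}) poly mat set).
            \<exists>gs. length gs \<le> L \<and> (\<forall>x \<in> set gs. \<exists>i<n. x \<in> Ksub n i) \<and> g = mprod n gs)
       \<and> (\<forall>g \<in> (Ggrp n :: 'a poly mat set).
            \<exists>gs. length gs \<le> 2 + 4 * (n + 1) \<and> (\<forall>x \<in> set gs. \<exists>i<n. x \<in> Ksub n i)
                 \<and> g = mprod n gs)"
proof -
  have "\<exists>gs. length gs \<le> 2 + 4 * (n + 1) \<and> (\<forall>x \<in> set gs. \<exists>i<n. x \<in> Ksub n i) \<and> g = mprod n gs"
    if g: "g \<in> Ggrp n" for g :: "'a poly mat"
  proof -
    obtain gs where gs: "length gs = 10" "set gs \<subseteq> Ksub n 0 \<union> Ksub n (n - 1)" "g = mprod n gs"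
      using Ggrp_factorization[OF assms g] by blast
    have "0 < n" "n - 1 < n"
      using assms by auto
    then have "\<forall>x \<in> set gs. \<exists>i<n. x \<in> Ksub n i"
      using gs(2) by blast
    then show ?thesis
      using gs(1,3) assms by (intro exI[of _ gs]) simp
  qed
  then show ?thesis
    by blast
qed

end
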